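(* For every $n\in\mathbb{N}$, both $10^{-n}\det[b_{i+j}]_{0\le i,j\le n}$ and $24^{-n}\det[A_{i+j}]_{0\le i,j\le n}$ are integers.
   Context: For $m\in\mathbb{N}$, the Apéry numbers are $b_m=\sum_{k=0}^m\binom{m}{k}^2\binom{m+k}{k}$ and $A_m=\sum_{k=0}^m\binom{m}{k}^2\binom{m+k}{k}^2$. For a sequence $(a_m)_{m\ge0}$, $\det[a_{i+j}]_{0\le i,j\le n}$ denotes the determinant of the $(n+1)\times(n+1)$ Hankel matrix with $(i,j)$-entry $a_{i+j}$. *)

theory Defs
  imports "Jordan_Normal_Form.Determinant"
begin

definition apery_b :: "nat \<Rightarrow> int" where
  "apery_b m = (\<Sum>k=0..m. int ((m choose k)^2 * ((m+k) choose k)))"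

definition apery_A :: "nat \<Rightarrow> int" where
  "apery_A m = (\<Sum>k=0..m. int ((m choose k)^2 * ((m+k) choose k)^2))"

definition hankel_det :: "(nat \<Rightarrow> int) \<Rightarrow> nat \<Rightarrow> int" where
  "hankel_det a n = det (mat (n+1) (n+1) (\<lambda>(i,j). a (i+j)))"

end

theory Submission
  imports Defs "HOL-Number_Theory.Cong" "HOL-Computational_Algebra.Primes"
begin

text \<open>
  Subtracting c times each row of the Hankel matrix [a(i+j)] from the next one does not change
  its determinant, and if d divides a(m+1) - c a(m) for all m it makes the last n rows divisible
  by d; hence d^n divides the determinant. It therefore suffices to show b_m = 3^m (mod 10) and
  A_m = 5^m (mod 24).

  For a prime p, Lucas' theorem (in a form that allows a carry) gives the Lucas property
  S(pq + r) = S(q) S(r) (mod p) for both Apery sums S, so S(m) = c^m (mod p) follows from the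
  cases m < p together with c^p = c (mod p). This settles the moduli 2, 5 and 3. Modulo 8,
  the summands of A_m are squares x^2 of x = (m choose k)(m+k choose k), which is even for
  k > 0, so x^2 = 2x (mod 8) and A_m + 1 = 2 D_m (mod 8) for the Delannoy number
  D_m = sum (m choose i)^2 2^i = 1 + 2m (mod 4); and 5^m = 1 + 4m (mod 8) as well.
\<close>

lemma binomial_add_prime_cong:
  fixes p n k :: nat
  assumes p: "prime p"
  shows "[(p + n) choose k = (n choose k) + (if p \<le> k then n choose (k - p) else 0)] (mod p)"
proof -
  have term_cong: "[(p choose j) * (n choose (k - j)) =
      (if j = 0 then n choose k else 0) + (if j = p then n choose (k - p) else 0)] (mod p)" for j
  proof -
    consider "j = 0" | "j = p" | "0 < j" "j < p" | "p < j" by linarith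
    then show ?thesis
    proof cases
      case 3
      then have "p dvd (p choose j) * (n choose (k - j))"
        using dvd_choose_prime[of j p] p by simp
      then show ?thesis using 3 by (simp add: cong_0_iff)
    qed (use prime_gt_0_nat[OF p] in \<open>auto simp: binomial_eq_0\<close>)
  qed
  have "(p + n) choose k = (\<Sum>j\<le>k. (p choose j) * (n choose (k - j)))"
    by (rule vandermonde[symmetric])
  also have "[\<dots> = (\<Sum>j\<le>k. (if j = 0 then n choose k else 0) + (if j = p then n choose (k - p) else 0))] (mod p)"
    by (intro cong_sum term_cong)
  also have "(\<Sum>j\<le>k. (if j = 0 then n choose k else 0) + (if j = p then n choose (k - p) else 0))
      = (n choose k) + (if p \<le> k then n choose (k - p) else 0)"
    by (simp add: sum.distrib)
  finally show ?thesis .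
qed

lemma lucas_cong:
  fixes p a b r s :: nat
  assumes p: "prime p" and "r < p" "s < p"
  shows "[(p * a + r) choose (p * b + s) = (a choose b) * (r choose s)] (mod p)"
proof (induction a arbitrary: b)
  case 0
  show ?case
  proof (cases b)
    case (Suc b')
    then have "r < p * b + s" using \<open>r < p\<close> by simp
    then show ?thesis using Suc by (simp add: binomial_eq_0)
  qed simp
next
  case (Suc a)
  let ?split = "((p * a + r) choose (p * b + s))
      + (if p \<le> p * b + s then (p * a + r) choose (p * b + s - p) else 0)"
  have "[(p * Suc a + r) choose (p * b + s) = ?split] (mod p)"
    using binomial_add_prime_cong[OF p, of "p * a + r"] by (simp add: add.assoc)
  also have "[?split = (Suc a choose b) * (r choose s)] (mod p)"
  proof (cases b)
    case 0
    have "\<not> p \<le> s" using \<open>s < p\<close> by simp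
    then show ?thesis using Suc.IH[of 0] 0 by simp
  next
    case b: (Suc b')
    have "[((p * a + r) choose (p * b + s)) + ((p * a + r) choose (p * b' + s))
        = (a choose b) * (r choose s) + (a choose b') * (r choose s)] (mod p)"
      by (intro cong_add Suc.IH)
    moreover have "p * b + s - p = p * b' + s" using b by simp
    ultimately show ?thesis using b by (simp add: algebra_simps)
  qed
  finally show ?case .
qed

lemma lucas_cong_carry:
  fixes p a b r s :: nat
  assumes p: "prime p" and "r < p" "s < p"
  shows "[(p * a + (r + s)) choose (p * b + s) = (a choose b) * ((r + s) choose s)] (mod p)"
proof (cases "r + s < p")
  case True
  then show ?thesis using lucas_cong[OF p True \<open>s < p\<close>] by simp
next
  case False
  define t where "t = r + s - p"
  have carry: "r + s = p * 1 + t" and "t < s" "t < p"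
    using False \<open>r < p\<close> \<open>s < p\<close> unfolding t_def by auto
  have "[(p * a + (r + s)) choose (p * b + s) = (Suc a choose b) * (t choose s)] (mod p)"
    using lucas_cong[OF p \<open>t < p\<close> \<open>s < p\<close>, of "Suc a" b] carry by (simp add: algebra_simps)
  moreover have "[(r + s) choose s = (1 choose 0) * (t choose s)] (mod p)"
    using lucas_cong[OF p \<open>t < p\<close> \<open>s < p\<close>, of 1 0] carry by simp
  ultimately have "p dvd (p * a + (r + s)) choose (p * b + s)" "p dvd (a choose b) * ((r + s) choose s)"
    using \<open>t < s\<close> by (simp_all add: binomial_eq_0 cong_0_iff)
  then show ?thesis by (simp add: cong_def dvd_eq_mod_eq_0)
qed

definition apery_term :: "nat \<Rightarrow> nat \<Rightarrow> nat \<Rightarrow> nat" where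
  "apery_term e m k = (m choose k)^2 * ((m + k) choose k)^e"

definition apery_sum :: "nat \<Rightarrow> nat \<Rightarrow> nat" where
  "apery_sum e m = (\<Sum>k\<le>m. apery_term e m k)"

lemma apery_b_eq_apery_sum: "apery_b m = int (apery_sum 1 m)"
  by (simp add: apery_b_def apery_sum_def apery_term_def atMost_atLeast0)

lemma apery_A_eq_apery_sum: "apery_A m = int (apery_sum 2 m)"
  by (simp add: apery_A_def apery_sum_def apery_term_def atMost_atLeast0)

lemma apery_sum_eq_sum_lessThan:
  assumes "m < N"
  shows "apery_sum e m = (\<Sum>k<N. apery_term e m k)"
  unfolding apery_sum_def
  by (rule sum.mono_neutral_left) (use assms in \<open>auto simp: apery_term_def binomial_eq_0\<close>)

lemma apery_term_lucas_cong:
  fixes p q r i s :: nat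
  assumes p: "prime p" and "r < p" "s < p"
  shows "[apery_term e (p * q + r) (p * i + s) = apery_term e q i * apery_term e r s] (mod p)"
proof -
  have "[(p * q + r) choose (p * i + s) = (q choose i) * (r choose s)] (mod p)"
    using lucas_cong[OF assms] .
  moreover have "[(p * q + r + (p * i + s)) choose (p * i + s) = ((q + i) choose i) * ((r + s) choose s)] (mod p)"
    using lucas_cong_carry[OF assms, of "q + i" i] by (simp add: algebra_simps)
  ultimately have "[apery_term e (p * q + r) (p * i + s)
      = ((q choose i) * (r choose s))^2 * (((q + i) choose i) * ((r + s) choose s))^e] (mod p)"
    unfolding apery_term_def by (intro cong_mult cong_pow)
  then show ?thesis by (simp add: apery_term_def algebra_simps)
qed

text \<open>Group the summation index by its base-p digits and apply Lucas' theorem termwise.\<close>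
lemma apery_sum_lucas_cong:
  fixes p q r :: nat
  assumes p: "prime p" and "r < p"
  shows "[apery_sum e (p * q + r) = apery_sum e q * apery_sum e r] (mod p)"
proof -
  have "apery_sum e (p * q + r) = (\<Sum>j<Suc q * p. apery_term e (p * q + r) j)"
    by (rule apery_sum_eq_sum_lessThan) (use \<open>r < p\<close> in simp)
  also have "\<dots> = (\<Sum>i<Suc q. \<Sum>j\<in>{i * p..<i * p + p}. apery_term e (p * q + r) j)"
    by (rule sum.nat_group[symmetric])
  also have "\<dots> = (\<Sum>i<Suc q. \<Sum>s<p. apery_term e (p * q + r) (p * i + s))"
  proof (rule sum.cong [OF refl])
    fix i
    show "(\<Sum>j\<in>{i * p..<i * p + p}. apery_term e (p * q + r) j)
        = (\<Sum>s<p. apery_term e (p * q + r) (p * i + s))"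
      by (subst sum.atLeastLessThan_shift_0) (simp add: lessThan_atLeast0 algebra_simps comp_def)
  qed
  also have "[\<dots> = (\<Sum>i<Suc q. \<Sum>s<p. apery_term e q i * apery_term e r s)] (mod p)"
    by (intro cong_sum apery_term_lucas_cong[OF p]) (use \<open>r < p\<close> in auto)
  also have "(\<Sum>i<Suc q. \<Sum>s<p. apery_term e q i * apery_term e r s)
      = (\<Sum>i<Suc q. apery_term e q i) * (\<Sum>s<p. apery_term e r s)"
    by (rule sum_product[symmetric])
  also have "\<dots> = apery_sum e q * apery_sum e r"
    using apery_sum_eq_sum_lessThan[of q "Suc q" e] apery_sum_eq_sum_lessThan[of r p e] \<open>r < p\<close>
    by simp
  finally show ?thesis .
qed

lemma apery_sum_cong_power:
  fixes p c e :: nat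
  assumes p: "prime p"
    and digits: "\<And>r. r < p \<Longrightarrow> [apery_sum e r = c^r] (mod p)"
    and fermat: "[c^p = c] (mod p)"
  shows "[apery_sum e m = c^m] (mod p)"
proof (induction m rule: less_induct)
  case (less m)
  show ?case
  proof (cases "m < p")
    case True
    then show ?thesis by (rule digits)
  next
    case False
    define q r where "q = m div p" and "r = m mod p"
    have m: "m = p * q + r" and "r < p" and "q < m"
      using False prime_gt_1_nat[OF p] unfolding q_def r_def by auto
    have "[apery_sum e m = apery_sum e q * apery_sum e r] (mod p)"
      using apery_sum_lucas_cong[OF p \<open>r < p\<close>] m by simp
    also have "[apery_sum e q * apery_sum e r = c^q * c^r] (mod p)"
      by (intro cong_mult less.IH \<open>q < m\<close> digits \<open>r < p\<close>)
    also have "[c^q * c^r = (c^p)^q * c^r] (mod p)"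
      by (intro cong_mult cong_pow cong_sym[OF fermat] cong_refl)
    also have "(c^p)^q * c^r = c^m"
      using m by (simp add: power_mult power_add)
    finally show ?thesis .
  qed
qed

lemma apery_sum_values:
  "apery_sum 1 0 = 1" "apery_sum 1 1 = 3" "apery_sum 1 2 = 19" "apery_sum 1 3 = 147"
  "apery_sum 1 4 = 1251" "apery_sum 2 0 = 1" "apery_sum 2 1 = 5" "apery_sum 2 2 = 73"
  by code_simp+

lemma apery_sum1_cong5: "[apery_sum 1 m = 3^m] (mod 5)"
proof (rule apery_sum_cong_power)
  fix r :: nat
  assume "r < 5"
  then have "r \<in> {0, 1, 2, 3, 4}" by auto
  then show "[apery_sum 1 r = 3^r] (mod 5)" by (auto simp: apery_sum_values[simplified] cong_def)
qed (simp_all add: cong_def)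

lemma apery_sum1_cong2: "[apery_sum 1 m = 3^m] (mod 2)"
proof (rule apery_sum_cong_power)
  fix r :: nat
  assume "r < 2"
  then have "r \<in> {0, 1}" by auto
  then show "[apery_sum 1 r = 3^r] (mod 2)" by (auto simp: apery_sum_values[simplified] cong_def)
qed (simp_all add: cong_def)

lemma apery_sum2_cong3: "[apery_sum 2 m = 5^m] (mod 3)"
proof (rule apery_sum_cong_power)
  fix r :: nat
  assume "r < 3"
  then have "r \<in> {0, 1, 2}" by auto
  then show "[apery_sum 2 r = 5^r] (mod 3)" by (auto simp: apery_sum_values[simplified] cong_def)
qed (simp_all add: cong_def)

lemma even_central_binomial: "0 < k \<Longrightarrow> even ((2 * k) choose k)"
proof -
  assume "0 < k"
  then obtain j where j: "k = Suc j" by (cases k) auto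
  have "(2 * k) choose k = (Suc (2 * j) choose j) + (Suc (2 * j) choose Suc j)"
    using j by simp
  moreover have "Suc (2 * j) choose Suc j = Suc (2 * j) choose j"
    using binomial_symmetric[of "Suc j" "Suc (2 * j)"] by simp
  ultimately show ?thesis by simp
qed

lemma even_choose_mult_choose_add:
  assumes "0 < k"
  shows "even ((m choose k) * ((m + k) choose k))"
proof (cases "k \<le> m")
  case True
  have "((m + k) choose (2 * k)) * ((2 * k) choose k) = ((m + k) choose k) * ((m + k - k) choose (2 * k - k))"
    by (rule choose_mult) (use True in auto)
  then have "(m choose k) * ((m + k) choose k) = ((m + k) choose (2 * k)) * ((2 * k) choose k)"
    by (simp add: mult_2)
  then show ?thesis using even_central_binomial[OF assms] by simp
qed (simp add: binomial_eq_0)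

definition delannoy :: "nat \<Rightarrow> nat" where
  "delannoy m = (\<Sum>k\<le>m. (m choose k) * ((m + k) choose k))"

lemma sum_choose_mult_choose:
  assumes "j \<le> m"
  shows "(\<Sum>k\<le>m. (m choose k) * (k choose j)) = (m choose j) * 2^(m - j)"
proof -
  have "(\<Sum>k\<le>m. (m choose k) * (k choose j)) = (\<Sum>k\<in>{j..m}. (m choose k) * (k choose j))"
    by (rule sum.mono_neutral_right) (auto simp: binomial_eq_0)
  also have "\<dots> = (\<Sum>k\<in>{j..m}. (m choose j) * ((m - j) choose (k - j)))"
    by (rule sum.cong[OF refl]) (simp add: choose_mult)
  also have "\<dots> = (m choose j) * (\<Sum>k\<in>{j..m}. (m - j) choose (k - j))"
    by (simp add: sum_distrib_left)
  also have "\<dots> = (m choose j) * 2^(m - j)"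
    using sum.atLeastAtMost_shift_0[OF assms, of "\<lambda>k. (m - j) choose (k - j)"]
    by (simp add: comp_def atMost_atLeast0 [symmetric] choose_row_sum)
  finally show ?thesis .
qed

text \<open>Expand the second binomial by Vandermonde and sum over k first.\<close>
lemma delannoy_eq_sum_power2: "delannoy m = (\<Sum>i\<le>m. (m choose i)^2 * 2^i)"
proof -
  have vandermonde': "(m + k) choose k = (\<Sum>j\<le>m. (m choose j) * (k choose j))" if "k \<le> m" for k
  proof -
    have "(m + k) choose k = (\<Sum>j\<le>k. (m choose j) * (k choose (k - j)))"
      by (rule vandermonde[symmetric])
    also have "\<dots> = (\<Sum>j\<le>k. (m choose j) * (k choose j))"
      by (rule sum.cong[OF refl]) (metis atMost_iff binomial_symmetric)
    also have "\<dots> = (\<Sum>j\<le>m. (m choose j) * (k choose j))"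
      by (rule sum.mono_neutral_left) (use that in \<open>auto simp: binomial_eq_0\<close>)
    finally show ?thesis .
  qed
  have "delannoy m = (\<Sum>k\<le>m. \<Sum>j\<le>m. (m choose j) * ((m choose k) * (k choose j)))"
    unfolding delannoy_def
    by (intro sum.cong refl) (simp add: vandermonde' sum_distrib_left mult_ac)
  also have "\<dots> = (\<Sum>j\<le>m. (m choose j) * ((m choose j) * 2^(m - j)))"
    by (subst sum.swap) (simp add: sum_distrib_left[symmetric] sum_choose_mult_choose)
  also have "\<dots> = (\<Sum>j\<le>m. (m choose (m - j))^2 * 2^(m - j))"
    by (intro sum.cong refl) (metis atMost_iff binomial_symmetric power2_eq_square mult.assoc)
  also have "\<dots> = (\<Sum>i\<le>m. (m choose i)^2 * 2^i)"
    by (rule sum.reindex_bij_witness[of _ "\<lambda>i. m - i" "\<lambda>i. m - i"]) auto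
  finally show ?thesis .
qed

lemma delannoy_cong4: "[delannoy m = 1 + 2 * m] (mod 4)"
proof -
  have term_cong: "[(m choose i)^2 * 2^i = (if i = 0 then 1 else 0) + (if i = 1 then 2 * m else 0)] (mod 4)"
    for i
  proof (cases "i \<ge> 2")
    case True
    then have "(4::nat) dvd 2^i"
      using le_imp_power_dvd[OF True, of "2::nat"] by simp
    then show ?thesis using True by (simp add: cong_0_iff)
  next
    case False
    then consider "i = 0" | "i = 1" by linarith
    then show ?thesis
    proof cases
      case 2
      have "[m^2 = m] (mod 2)"
        by (simp add: cong_def mod2_eq_if power2_eq_square)
      then show ?thesis using 2 cong_cmult_leftI[of "m^2" m 2 2] by (simp add: mult.commute)
    qed simp
  qed
  have "[delannoy m = (\<Sum>i\<le>m. (if i = 0 then 1 else 0) + (if i = 1 then 2 * m else 0))] (mod 4)"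
    unfolding delannoy_eq_sum_power2 by (intro cong_sum term_cong)
  also have "(\<Sum>i\<le>m. (if i = 0 then 1 else 0) + (if i = 1 then 2 * m else (0::nat))) = 1 + 2 * m"
    by (cases m) (simp_all add: sum.distrib)
  finally show ?thesis .
qed

lemma apery_sum2_delannoy_cong: "[apery_sum 2 m + 1 = 2 * delannoy m] (mod 8)"
proof -
  let ?x = "\<lambda>k. (m choose k) * ((m + k) choose k)"
  have term_cong: "[?x k ^ 2 + (if k = 0 then 1 else 0) = 2 * ?x k] (mod 8)" for k
  proof (cases "k = 0")
    case False
    then obtain y where y: "?x k = 2 * y"
      using even_choose_mult_choose_add[of k m] by (auto elim: evenE)
    have "[y^2 = y] (mod 2)"
      by (simp add: cong_def mod2_eq_if power2_eq_square)
    then have "[4 * y^2 = 4 * y] (mod 8)"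
      using cong_cmult_leftI[of "y^2" y 2 4] by simp
    then show ?thesis using False y by (simp add: power_mult_distrib)
  qed (simp add: cong_def)
  have "apery_sum 2 m + 1 = (\<Sum>k\<le>m. ?x k ^ 2 + (if k = 0 then 1 else 0))"
    by (simp add: sum.distrib apery_sum_def apery_term_def power_mult_distrib)
  also have "[\<dots> = (\<Sum>k\<le>m. 2 * ?x k)] (mod 8)"
    by (intro cong_sum term_cong)
  also have "(\<Sum>k\<le>m. 2 * ?x k) = 2 * delannoy m"
    by (simp add: delannoy_def sum_distrib_left)
  finally show ?thesis .
qed

lemma pow5_cong8: "[5^m = 1 + 4 * m] (mod (8::nat))"
proof (induction m)
  case (Suc m)
  then have "[5 * 5^m = 5 * (1 + 4 * m)] (mod 8)"
    by (rule cong_scalar_left)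
  also have "5 * (1 + 4 * m) = (1 + 4 * Suc m) + 2 * m * 8"
    by simp
  also have "[\<dots> = 1 + 4 * Suc m] (mod 8)"
    by (simp only: cong_add_lcancel_0_nat cong_mult_self_right)
  finally show ?case
    by simp
qed (simp add: cong_def)

lemma apery_sum2_cong8: "[apery_sum 2 m = 5^m] (mod 8)"
proof -
  have "[apery_sum 2 m + 1 = 2 * delannoy m] (mod 8)"
    by (rule apery_sum2_delannoy_cong)
  also have "[2 * delannoy m = 2 * (1 + 2 * m)] (mod 8)"
    using cong_cmult_leftI[OF delannoy_cong4, of 2] by simp
  also have "2 * (1 + 2 * m) = (1 + 4 * m) + 1"
    by simp
  also have "[(1 + 4 * m) + 1 = 5^m + 1] (mod 8)"
    using pow5_cong8[of m] by (simp only: cong_add_rcancel_nat cong_sym)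
  finally show ?thesis
    by (simp only: cong_add_rcancel_nat)
qed

lemma apery_sum1_cong10: "[apery_sum 1 m = 3^m] (mod 10)"
  using coprime_cong_mult_nat[OF apery_sum1_cong2 apery_sum1_cong5, of m] by simp

lemma apery_sum2_cong24: "[apery_sum 2 m = 5^m] (mod 24)"
  using coprime_cong_mult_nat[OF apery_sum2_cong8 apery_sum2_cong3, of m]
  by (simp add: coprime_iff_gcd_eq_1 gcd_non_0_nat)

lemma int_dvd_diff_of_cong_power:
  fixes f :: "nat \<Rightarrow> nat"
  assumes "\<And>m. [f m = c^m] (mod d)"
  shows "int d dvd int (f (Suc m)) - int c * int (f m)"
proof -
  have "[int (f (Suc m)) = int c * int c ^ m] (mod int d)"
    using assms[of "Suc m"] by (simp add: cong_int_iff [symmetric])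
  also have "[int c * int c ^ m = int c * int (f m)] (mod int d)"
    using assms[of m] by (intro cong_scalar_left) (simp add: cong_int_iff [symmetric] cong_sym)
  finally show ?thesis
    by (simp add: cong_iff_dvd_diff)
qed

lemma det_dvd_power_of_rows_dvd:
  fixes A :: "int mat"
  assumes A: "A \<in> carrier_mat (Suc n) (Suc n)"
    and rows_dvd: "\<And>i j. 0 < i \<Longrightarrow> i < Suc n \<Longrightarrow> j < Suc n \<Longrightarrow> d dvd A $$ (i, j)"
  shows "d ^ n dvd det A"
proof -
  define D :: "int mat" where
    "D = mat (Suc n) (Suc n) (\<lambda>(i, j). if i = j then if i = 0 then 1 else d else 0)"
  define B :: "int mat" where
    "B = mat (Suc n) (Suc n) (\<lambda>(i, j). if i = 0 then A $$ (i, j) else A $$ (i, j) div d)"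
  have D: "D \<in> carrier_mat (Suc n) (Suc n)" and B: "B \<in> carrier_mat (Suc n) (Suc n)"
    by (simp_all add: D_def B_def)
  have "A = D * B"
  proof (rule eq_matI)
    fix i j
    assume "i < dim_row (D * B)" "j < dim_col (D * B)"
    then have i: "i < Suc n" and j: "j < Suc n" using D B by auto
    have "(D * B) $$ (i, j) = (\<Sum>k\<in>{0..<Suc n}. (if i = k then if i = 0 then 1 else d else 0) * B $$ (k, j))"
      using i j by (simp add: D_def B_def scalar_prod_def)
    also have "\<dots> = (if i = 0 then 1 else d) * B $$ (i, j)"
      using i by (simp add: if_distrib[of "\<lambda>x. x * _"] cong: if_cong)
    also have "\<dots> = A $$ (i, j)"
      using i j rows_dvd[of i j] by (simp add: B_def)
    finally show "A $$ (i, j) = (D * B) $$ (i, j)" ..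
  qed (use A D B in auto)
  moreover have "diag_mat D = 1 # replicate n d"
    by (rule nth_equalityI) (auto simp: diag_mat_def D_def nth_Cons' simp del: upt_Suc)
  then have "det D = d ^ n"
    by (subst det_lower_triangular[OF _ D]) (auto simp: D_def)
  ultimately show ?thesis
    using det_mult[OF D B] by simp
qed

lemma hankel_det_dvd_power:
  fixes a :: "nat \<Rightarrow> int"
  assumes step: "\<And>m. d dvd a (Suc m) - c * a m"
  shows "d ^ n dvd hankel_det a n"
proof -
  define H :: "int mat" where "H = mat (Suc n) (Suc n) (\<lambda>(i, j). a (i + j))"
  define L :: "int mat" where
    "L = mat (Suc n) (Suc n) (\<lambda>(i, j). if i = j then 1 else if i = Suc j then - c else 0)"
  have H: "H \<in> carrier_mat (Suc n) (Suc n)" and L: "L \<in> carrier_mat (Suc n) (Suc n)"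
    by (simp_all add: H_def L_def)
  have "diag_mat L = replicate (Suc n) 1"
    by (rule nth_equalityI) (auto simp: diag_mat_def L_def nth_Cons' simp del: upt_Suc)
  then have "det L = 1"
    by (subst det_lower_triangular[OF _ L]) (auto simp: L_def)
  have row_op: "(L * H) $$ (i, j) = (if i = 0 then a j else a (i + j) - c * a (i - 1 + j))"
    if i: "i < Suc n" and j: "j < Suc n" for i j
  proof -
    have "(L * H) $$ (i, j)
        = (\<Sum>k\<in>{0..<Suc n}. (if k = i then a (k + j) else 0) + (if Suc k = i then - c * a (k + j) else 0))"
      using i j by (auto simp: L_def H_def scalar_prod_def intro!: sum.cong)
    also have "\<dots> = (if i = 0 then a j else a (i + j) - c * a (i - 1 + j))"
      using i by (cases i) (simp_all add: sum.distrib)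
    finally show ?thesis .
  qed
  have "d ^ n dvd det (L * H)"
  proof (rule det_dvd_power_of_rows_dvd)
    fix i j
    assume "0 < i" "i < Suc n" "j < Suc n"
    then show "d dvd (L * H) $$ (i, j)"
      using row_op step[of "i - 1 + j"] by (simp add: Suc_diff_Suc)
  qed (use L H in simp)
  moreover have "det (L * H) = det H"
    using det_mult[OF L H] \<open>det L = 1\<close> by simp
  ultimately show ?thesis
    by (simp add: hankel_det_def H_def)
qed

theorem theorem1p3:
  fixes n :: nat
  shows "(of_int (hankel_det apery_b n) / 10 ^ n :: rat) \<in> \<int> \<and>
         (of_int (hankel_det apery_A n) / 24 ^ n :: rat) \<in> \<int>"
proof -
  have "10 ^ n dvd hankel_det apery_b n"
  proof (rule hankel_det_dvd_power)
    show "10 dvd apery_b (Suc m) - 3 * apery_b m" for m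
      using int_dvd_diff_of_cong_power[OF apery_sum1_cong10, of m] by (simp add: apery_b_eq_apery_sum)
  qed
  moreover have "24 ^ n dvd hankel_det apery_A n"
  proof (rule hankel_det_dvd_power)
    show "24 dvd apery_A (Suc m) - 5 * apery_A m" for m
      using int_dvd_diff_of_cong_power[OF apery_sum2_cong24, of m] by (simp add: apery_A_eq_apery_sum)
  qed
  ultimately show ?thesis
    by (auto elim!: dvdE)
qed

end
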